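(* Let $\mathcal{M}$ be a measure space which is a finite disjoint union $\mathcal{M}=\mathcal{X}_1\cup\cdots\cup\mathcal{X}_N$ of measurable sets with $|\mathcal{X}_j|=\omega_j>0$, and let $x_j\in\mathcal{X}_j$ for $j=1,\dots,N$. Let $1\leqslant p,q\leqslant+\infty$ with $1/p+1/q=1$, and let $\Phi$ be a measurable kernel on $\mathcal{M}\times\mathcal{M}$ such that $\{\int_{\mathcal{M}}|\Phi(x,y)|^q\,dy\}^{1/q}<+\infty$ for every $x$ and $\{\int_{\mathcal{M}}(\int_{\mathcal{M}}|\Phi(x,y)|\,dx)^q\,dy\}^{1/q}<+\infty$ (with the usual essential supremum interpretation when $q=+\infty$). Then the functional $\mathcal{E}_{\mathbf{x},\boldsymbol\omega}$ is well defined and continuous on $\mathbb{H}^{\Phi}_p(\mathcal{M})$ and its norm is \[ \|\mathcal{E}_{\mathbf{x},\boldsymbol\omega}\|_{\Phi,p}=\Big\{\int_{\mathcal{M}}\Big|\sum_{j=1}^N\int_{\mathcal{X}_j}\big(\Phi(x_j,y)-\Phi(x,y)\big)\,dx\Big|^q\,dy\Big\}^{1/q}. \]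
   Context: $\mathbb{H}^{\Phi}_p(\mathcal{M})$ is the space of all potentials $f(x)=\int_{\mathcal{M}}\Phi(x,y)g(y)\,dy$ with $g\in L^p(\mathcal{M})$ (defined pointwise for every $x$), with norm $\|f\|_{\mathbb{H}^\Phi_p}=\inf\{\int_{\mathcal{M}}|g|^p\}^{1/p}$ over all $g$ whose potential is $f$. $\mathcal{E}_{\mathbf{x},\boldsymbol\omega}(f)=\sum_{j=1}^N\omega_jf(x_j)-\int_{\mathcal{M}}f(x)\,dx$, and $\|\mathcal{E}_{\mathbf{x},\boldsymbol\omega}\|_{\Phi,p}=\sup\{|\mathcal{E}_{\mathbf{x},\boldsymbol\omega}(f)|/\|f\|_{\mathbb{H}^\Phi_p(\mathcal{M})}\}$ is its norm as a functional on $\mathbb{H}^\Phi_p(\mathcal{M})$. *)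

theory Defs
  imports "HOL-Analysis.Analysis" "HOL-Probability.Essential_Supremum"
begin

definition epow :: "ennreal \<Rightarrow> real \<Rightarrow> ennreal" where
  "epow t r = (if t = \<infinity> then \<infinity> else ennreal (enn2real t powr r))"

definition lpn :: "'a measure \<Rightarrow> ennreal \<Rightarrow> ('a \<Rightarrow> ennreal) \<Rightarrow> ennreal" where
  "lpn M p h = (if p = \<infinity> then e2ennreal (esssup M (\<lambda>x. enn2ereal (h x)))
     else epow (\<integral>\<^sup>+ x. epow (h x) (enn2real p) \<partial>M) (1 / enn2real p))"

definition is_potential :: "'a measure \<Rightarrow> ennreal \<Rightarrow> ('a \<Rightarrow> 'a \<Rightarrow> real) \<Rightarrow> ('a \<Rightarrow> real) \<Rightarrow> ('a \<Rightarrow> real) \<Rightarrow> bool" where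
  "is_potential M p \<Phi> g f \<longleftrightarrow> g \<in> borel_measurable M \<and> lpn M p (\<lambda>y. ennreal \<bar>g y\<bar>) < \<infinity> \<and>
     (\<forall>x\<in>space M. integrable M (\<lambda>y. \<Phi> x y * g y) \<and> f x = (\<integral> y. \<Phi> x y * g y \<partial>M))"

definition in_H :: "'a measure \<Rightarrow> ennreal \<Rightarrow> ('a \<Rightarrow> 'a \<Rightarrow> real) \<Rightarrow> ('a \<Rightarrow> real) \<Rightarrow> bool" where
  "in_H M p \<Phi> f \<longleftrightarrow> (\<exists>g. is_potential M p \<Phi> g f)"

definition H_norm :: "'a measure \<Rightarrow> ennreal \<Rightarrow> ('a \<Rightarrow> 'a \<Rightarrow> real) \<Rightarrow> ('a \<Rightarrow> real) \<Rightarrow> ennreal" where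
  "H_norm M p \<Phi> f = (INF g \<in> {g. is_potential M p \<Phi> g f}. lpn M p (\<lambda>y. ennreal \<bar>g y\<bar>))"

definition quad_err :: "'a measure \<Rightarrow> nat \<Rightarrow> (nat \<Rightarrow> 'a) \<Rightarrow> (nat \<Rightarrow> real) \<Rightarrow> ('a \<Rightarrow> real) \<Rightarrow> real" where
  "quad_err M N xs \<omega> f = (\<Sum>j<N. \<omega> j * f (xs j)) - (\<integral> x. f x \<partial>M)"

definition err_norm :: "'a measure \<Rightarrow> ennreal \<Rightarrow> ('a \<Rightarrow> 'a \<Rightarrow> real) \<Rightarrow> nat \<Rightarrow> (nat \<Rightarrow> 'a) \<Rightarrow> (nat \<Rightarrow> real) \<Rightarrow> ennreal" where
  "err_norm M p \<Phi> N xs \<omega> = (SUP f \<in> {f. in_H M p \<Phi> f \<and> H_norm M p \<Phi> f \<noteq> 0}.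
      ennreal \<bar>quad_err M N xs \<omega> f\<bar> / H_norm M p \<Phi> f)"

end

theory Submission
  imports Defs
begin

text \<open>For the potential f of a density g, Fubini and the partition of M into the cells X j of
  measure \<omega> j give E(f) = \<integral> K(y) g(y) dy with the error kernel
  K(y) = \<Sum>j \<integral>_{X j} (\<Phi>(x_j, y) - \<Phi>(x, y)) dx. Hoelder's inequality bounds |E(f)| by
  \<parallel>K\<parallel>_q \<parallel>g\<parallel>_p and hence by \<parallel>K\<parallel>_q \<parallel>f\<parallel>_H. Conversely, for every c < \<parallel>K\<parallel>_q the usual norming
  function of K (sgn K, sgn K |K|^(q-1), or sgn K on a set where |K| exceeds c) is the density of
  a potential f with E(f) \<ge> c \<parallel>f\<parallel>_H. The integrability assumptions on \<Phi> make every potential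
  integrable and justify Fubini.\<close>

lemma ennreal_ge_1_cases:
  fixes q :: ennreal
  assumes "1 \<le> q"
  obtains "q = \<infinity>" | s where "q = ennreal s" "1 \<le> s"
proof (cases q rule: ennreal_cases)
  case (real s)
  then show ?thesis using that assms by (metis ennreal_1 ennreal_le_iff)
qed (use that in auto)

lemma conjugate_exponent_cases:
  fixes p q :: ennreal
  assumes p: "1 \<le> p" and q: "1 \<le> q" and conj: "inverse p + inverse q = 1"
  obtains "p = \<infinity>" "q = 1" | "p = 1" "q = \<infinity>"
    | r s where "p = ennreal r" "q = ennreal s" "1 < r" "1 < s" "1/r + 1/s = 1"
proof -
  have one_if_inverse_one: "inverse t = 1 \<Longrightarrow> t = 1" if "1 \<le> t" for t :: ennreal
    using that by (cases rule: ennreal_ge_1_cases) (auto simp: inverse_ennreal)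
  show ?thesis
    using p
  proof (cases rule: ennreal_ge_1_cases)
    case 1
    then show ?thesis using that conj one_if_inverse_one[OF q] by simp
  next
    case (2 r)
    note r = this
    show ?thesis
      using q
    proof (cases rule: ennreal_ge_1_cases)
      case 1
      then show ?thesis using that conj one_if_inverse_one[OF p] by simp
    next
      case (2 s)
      have "inverse p + inverse q = ennreal (1/r + 1/s)"
        using r 2 by (simp add: inverse_ennreal inverse_eq_divide ennreal_plus)
      then have "ennreal (1/r + 1/s) = ennreal 1" using conj by (metis ennreal_1)
      then have rs: "1/r + 1/s = 1" using r 2 by (subst (asm) ennreal_inj) auto
      then have "r \<noteq> 1" "s \<noteq> 1" using r 2 by auto
      then show ?thesis using that r 2 rs by simp
    qed
  qed
qed

lemma epow_ennreal: "0 \<le> a \<Longrightarrow> epow (ennreal a) r = ennreal (a powr r)"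
  by (simp add: epow_def)

lemma epow_1 [simp]: "epow t 1 = t"
  by (cases t) (auto simp: epow_def)

lemma epow_top [simp]: "epow top r = top"
  by (simp add: epow_def)

lemma epow_eq_0_iff: "0 < r \<Longrightarrow> epow t r = 0 \<longleftrightarrow> t = 0"
  by (cases t) (auto simp: epow_def)

lemma epow_mono: "a \<le> b \<Longrightarrow> 0 \<le> r \<Longrightarrow> epow a r \<le> epow b r"
  by (cases a; cases b) (auto simp: epow_def top_unique intro!: ennreal_leI powr_mono2)

lemma powr_add_le_two_powr:
  fixes x y s :: real
  assumes "0 \<le> x" "0 \<le> y" "0 < s"
  shows "(x + y) powr s \<le> 2 powr s * (x powr s + y powr s)"
proof -
  have "(x + y) powr s \<le> (2 * max x y) powr s"
    using assms by (intro powr_mono2) auto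
  also have "\<dots> = 2 powr s * max x y powr s"
    using assms by (simp add: powr_mult)
  also have "\<dots> \<le> 2 powr s * (x powr s + y powr s)"
    by (intro mult_left_mono) (auto simp: max_def)
  finally show ?thesis .
qed

lemma epow_add_le: "0 < r \<Longrightarrow> epow (a + b) r \<le> ennreal (2 powr r) * (epow a r + epow b r)"
  by (cases a; cases b)
    (auto simp: epow_def ennreal_mult_top ennreal_mult[symmetric] ennreal_plus[symmetric]
      simp del: ennreal_plus intro!: ennreal_leI powr_add_le_two_powr)

lemma epow_cmult: "0 \<le> c \<Longrightarrow> 0 < r \<Longrightarrow> epow (ennreal c * a) r = ennreal (c powr r) * epow a r"
  by (cases a)
    (auto simp: epow_def ennreal_mult_top ennreal_mult[symmetric] powr_mult
      simp del: ennreal_0 split: if_splits)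

lemma measurable_epow [measurable]:
  assumes [measurable]: "h \<in> borel_measurable M"
  shows "(\<lambda>x. epow (h x) r) \<in> borel_measurable M"
  unfolding epow_def by measurable

lemma lpn_ennreal: "0 < r \<Longrightarrow> lpn M (ennreal r) h = epow (\<integral>\<^sup>+ x. epow (h x) r \<partial>M) (1 / r)"
  by (simp add: lpn_def)

lemma lpn_ennreal_abs:
  "0 < r \<Longrightarrow> lpn M (ennreal r) (\<lambda>x. ennreal \<bar>g x\<bar>) = epow (\<integral>\<^sup>+ x. ennreal (\<bar>g x\<bar> powr r) \<partial>M) (1 / r)"
  by (simp add: lpn_def epow_ennreal)

lemma lpn_1: "lpn M 1 h = (\<integral>\<^sup>+ x. h x \<partial>M)"
  using lpn_ennreal[of 1 M h] by simp

lemma lpn_top_AE_le: "AE x in M. h x \<le> lpn M \<infinity> h"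
  using esssup_AE[of "\<lambda>x. enn2ereal (h x)" M] unfolding lpn_def
  by eventually_elim (metis e2ennreal_enn2ereal e2ennreal_mono)

lemma lpn_top_le:
  assumes "h \<in> borel_measurable M" "AE x in M. h x \<le> C"
  shows "lpn M \<infinity> h \<le> C"
proof -
  have "esssup M (\<lambda>x. enn2ereal (h x)) \<le> enn2ereal C"
    using assms by (intro esssup_I) (auto elim!: eventually_mono simp: less_eq_ennreal.rep_eq)
  then show ?thesis unfolding lpn_def
    by (metis e2ennreal_enn2ereal e2ennreal_mono)
qed

lemma lpn_top_less_top_iff:
  "h \<in> borel_measurable M \<Longrightarrow> lpn M \<infinity> h < \<infinity> \<longleftrightarrow> (\<exists>C<\<infinity>. AE x in M. h x \<le> C)"
  using lpn_top_AE_le lpn_top_le by (metis le_less_trans)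

lemma lpn_ennreal_less_top_iff:
  "0 < r \<Longrightarrow> lpn M (ennreal r) h < \<infinity> \<longleftrightarrow> (\<integral>\<^sup>+ x. epow (h x) r \<partial>M) < \<infinity>"
  by (cases "\<integral>\<^sup>+ x. epow (h x) r \<partial>M") (auto simp: lpn_ennreal epow_def)

lemma lpn_less_top_mono:
  assumes q: "1 \<le> q" and [measurable]: "h \<in> borel_measurable M"
    and le: "AE x in M. h x \<le> h' x" and fin: "lpn M q h' < \<infinity>"
  shows "lpn M q h < \<infinity>"
  using q
proof (cases rule: ennreal_ge_1_cases)
  case 1
  then obtain C where "C < \<infinity>" "AE x in M. h' x \<le> C"
    using fin lpn_top_AE_le by blast
  moreover from this(2) le have "AE x in M. h x \<le> C"
    by eventually_elim (rule order_trans)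
  ultimately show ?thesis
    unfolding 1 lpn_top_less_top_iff[OF \<open>h \<in> borel_measurable M\<close>] by blast
next
  case (2 r)
  then have r: "0 < r" by simp
  have "(\<integral>\<^sup>+ x. epow (h x) r \<partial>M) \<le> (\<integral>\<^sup>+ x. epow (h' x) r \<partial>M)"
    using le r by (intro nn_integral_mono_AE) (auto elim!: eventually_mono intro: epow_mono)
  also have "\<dots> < \<infinity>" using fin unfolding 2 lpn_ennreal_less_top_iff[OF r] .
  finally show ?thesis unfolding 2 lpn_ennreal_less_top_iff[OF r] .
qed

lemma lpn_less_top_add:
  assumes q: "1 \<le> q" and [measurable]: "h \<in> borel_measurable M" "h' \<in> borel_measurable M"
    and fin: "lpn M q h < \<infinity>" "lpn M q h' < \<infinity>"
  shows "lpn M q (\<lambda>x. h x + h' x) < \<infinity>"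
  using q
proof (cases rule: ennreal_ge_1_cases)
  case 1
  obtain C C' where "C < \<infinity>" "AE x in M. h x \<le> C" "C' < \<infinity>" "AE x in M. h' x \<le> C'"
    using fin 1 lpn_top_AE_le by blast
  then have "C + C' < \<infinity>" "AE x in M. h x + h' x \<le> C + C'"
    by (auto elim!: eventually_elim2 intro: add_mono)
  moreover have "(\<lambda>x. h x + h' x) \<in> borel_measurable M" by measurable
  ultimately show ?thesis unfolding 1 using lpn_top_less_top_iff by blast
next
  case (2 r)
  then have r: "0 < r" by simp
  have "(\<integral>\<^sup>+ x. epow (h x + h' x) r \<partial>M)
      \<le> (\<integral>\<^sup>+ x. ennreal (2 powr r) * (epow (h x) r + epow (h' x) r) \<partial>M)"
    using r by (intro nn_integral_mono epow_add_le) auto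
  also have "\<dots> = ennreal (2 powr r) * ((\<integral>\<^sup>+ x. epow (h x) r \<partial>M) + (\<integral>\<^sup>+ x. epow (h' x) r \<partial>M))"
    by (simp add: nn_integral_cmult nn_integral_add)
  also have "\<dots> < \<infinity>"
    using fin unfolding 2 lpn_ennreal_less_top_iff[OF r] by (simp add: ennreal_mult_less_top)
  finally show ?thesis unfolding 2 lpn_ennreal_less_top_iff[OF r] .
qed

lemma lpn_less_top_cmult:
  assumes q: "1 \<le> q" and [measurable]: "h \<in> borel_measurable M" and c: "0 \<le> c"
    and fin: "lpn M q h < \<infinity>"
  shows "lpn M q (\<lambda>x. ennreal c * h x) < \<infinity>"
  using q
proof (cases rule: ennreal_ge_1_cases)
  case 1
  then obtain C where "C < \<infinity>" "AE x in M. h x \<le> C"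
    using fin lpn_top_AE_le by blast
  then have "ennreal c * C < \<infinity>" "AE x in M. ennreal c * h x \<le> ennreal c * C"
    by (auto simp: ennreal_mult_less_top elim!: eventually_mono intro: mult_left_mono)
  moreover have "(\<lambda>x. ennreal c * h x) \<in> borel_measurable M" by measurable
  ultimately show ?thesis unfolding 1 using lpn_top_less_top_iff by blast
next
  case (2 r)
  then have r: "0 < r" by simp
  then have "(\<integral>\<^sup>+ x. epow (ennreal c * h x) r \<partial>M) = ennreal (c powr r) * (\<integral>\<^sup>+ x. epow (h x) r \<partial>M)"
    using c by (simp add: epow_cmult nn_integral_cmult)
  also have "\<dots> < \<infinity>"
    using fin unfolding 2 lpn_ennreal_less_top_iff[OF r] by (simp add: ennreal_mult_less_top)
  finally show ?thesis unfolding 2 lpn_ennreal_less_top_iff[OF r] .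
qed

lemma lpn_less_top_sum:
  assumes q: "1 \<le> q" and "finite I"
    and [measurable]: "\<And>i. i \<in> I \<Longrightarrow> h i \<in> borel_measurable M"
    and fin: "\<And>i. i \<in> I \<Longrightarrow> lpn M q (h i) < \<infinity>"
  shows "lpn M q (\<lambda>x. \<Sum>i\<in>I. h i x) < \<infinity>"
  using \<open>finite I\<close> assms
proof (induction I rule: finite_induct)
  case empty
  show ?case
    using q
  proof (cases rule: ennreal_ge_1_cases)
    case 1
    then show ?thesis unfolding 1 by (subst lpn_top_less_top_iff) (auto intro: exI[of _ 0])
  qed (simp add: lpn_ennreal epow_def)
next
  case (insert i I)
  have "(\<lambda>x. \<Sum>i\<in>I. h i x) \<in> borel_measurable M" using insert by measurable
  then have "lpn M q (\<lambda>x. h i x + (\<Sum>i\<in>I. h i x)) < \<infinity>"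
    using insert by (intro lpn_less_top_add[OF q]) auto
  with insert show ?case by simp
qed

lemma AE_less_top_of_lpn_less_top:
  assumes q: "1 \<le> q" and [measurable]: "h \<in> borel_measurable M" and fin: "lpn M q h < \<infinity>"
  shows "AE x in M. h x < \<infinity>"
  using q
proof (cases rule: ennreal_ge_1_cases)
  case 1
  then obtain C where "C < \<infinity>" "AE x in M. h x \<le> C"
    using fin lpn_top_AE_le by blast
  then show ?thesis by (auto elim!: eventually_mono intro: le_less_trans)
next
  case (2 r)
  then have r: "0 < r" by simp
  have "AE x in M. epow (h x) r \<noteq> \<infinity>"
    using fin unfolding 2 lpn_ennreal_less_top_iff[OF r] by (intro nn_integral_PInf_AE) auto
  then show ?thesis by eventually_elim (auto simp: epow_def less_top[symmetric])
qed

lemma Youngs_inequality_scaled: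
  fixes u v a b r s :: real
  assumes r: "1 < r" and s: "1 < s" and rs: "1/r + 1/s = 1" and a: "0 < a" and b: "0 < b"
  defines "C \<equiv> a powr (1/r) * b powr (1/s)"
  shows "\<bar>u * v\<bar> \<le> C / (r * a) * \<bar>u\<bar> powr r + C / (s * b) * \<bar>v\<bar> powr s"
proof -
  define \<alpha> where "\<alpha> = \<bar>u\<bar> / a powr (1/r)"
  define \<beta> where "\<beta> = \<bar>v\<bar> / b powr (1/s)"
  have "\<alpha> * \<beta> \<le> \<alpha> powr r / r + \<beta> powr s / s"
    using r s rs by (intro Youngs_inequality) (auto simp: \<alpha>_def \<beta>_def)
  moreover have "\<alpha> powr r = \<bar>u\<bar> powr r / a" "\<beta> powr s = \<bar>v\<bar> powr s / b"
    using a b r s by (simp_all add: \<alpha>_def \<beta>_def powr_divide powr_powr)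
  ultimately have "\<alpha> * \<beta> \<le> \<bar>u\<bar> powr r / a / r + \<bar>v\<bar> powr s / b / s"
    by simp
  moreover have "\<bar>u * v\<bar> = C * (\<alpha> * \<beta>)" and "0 < C"
    using a b by (simp_all add: C_def \<alpha>_def \<beta>_def abs_mult)
  ultimately have "\<bar>u * v\<bar> \<le> C * (\<bar>u\<bar> powr r / a / r + \<bar>v\<bar> powr s / b / s)"
    by simp
  then show ?thesis by (simp add: field_simps)
qed

lemma AE_eq_0_of_nn_integral_powr_eq_0:
  fixes f :: "'a \<Rightarrow> real"
  assumes [measurable]: "f \<in> borel_measurable M" and "0 < r"
    and "(\<integral>\<^sup>+ x. ennreal (\<bar>f x\<bar> powr r) \<partial>M) = 0"
  shows "AE x in M. f x = 0"
proof -
  have "AE x in M. ennreal (\<bar>f x\<bar> powr r) = 0"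
    using assms by (subst nn_integral_0_iff_AE[symmetric]) auto
  then show ?thesis by eventually_elim (auto simp: ennreal_eq_0_iff)
qed

lemma Holder_inequality_real_exponents:
  fixes f g :: "'a \<Rightarrow> real"
  assumes [measurable]: "f \<in> borel_measurable M" "g \<in> borel_measurable M"
    and r: "1 < r" and s: "1 < s" and rs: "1/r + 1/s = 1"
  shows "(\<integral>\<^sup>+ x. ennreal \<bar>f x * g x\<bar> \<partial>M) \<le>
     epow (\<integral>\<^sup>+ x. ennreal (\<bar>f x\<bar> powr r) \<partial>M) (1/r) * epow (\<integral>\<^sup>+ x. ennreal (\<bar>g x\<bar> powr s) \<partial>M) (1/s)"
    (is "?I \<le> epow ?A _ * epow ?B _")
proof -
  have r0: "0 < 1/r" and s0: "0 < 1/s" using r s by auto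
  consider "?A = 0 \<or> ?B = 0" | "?A = \<infinity> \<or> ?B = \<infinity>" "?A \<noteq> 0" "?B \<noteq> 0"
    | a b where "?A = ennreal a" "?B = ennreal b" "0 < a" "0 < b"
  proof (cases "?A = 0 \<or> ?B = 0")
    case nonzero: False
    show ?thesis
    proof (cases "?A = \<infinity> \<or> ?B = \<infinity>")
      case False
      obtain a where a: "?A = ennreal a" "0 \<le> a"
        using False by (cases ?A) auto
      obtain b where b: "?B = ennreal b" "0 \<le> b"
        using False by (cases ?B) auto
      show ?thesis
        using that(3)[OF a(1) b(1)] nonzero a b by (simp add: less_le)
    qed (use that nonzero in blast)
  qed (use that in blast)
  then show ?thesis
  proof cases
    case 1
    then have "AE x in M. f x = 0 \<or> g x = 0"
      using r s AE_eq_0_of_nn_integral_powr_eq_0[of f M r] AE_eq_0_of_nn_integral_powr_eq_0[of g M s]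
      by (auto elim: eventually_mono)
    then have "?I = 0" by (subst nn_integral_0_iff_AE) (auto elim!: eventually_mono)
    then show ?thesis by simp
  next
    case 2
    then have "epow ?A (1/r) * epow ?B (1/s) = \<infinity>"
      using epow_eq_0_iff[OF r0, of ?A] epow_eq_0_iff[OF s0, of ?B]
      by (auto simp: ennreal_mult_top ennreal_top_mult)
    then show ?thesis by simp
  next
    case (3 a b)
    define C where "C = a powr (1/r) * b powr (1/s)"
    have C: "0 \<le> C" by (simp add: C_def)
    have "?I \<le> (\<integral>\<^sup>+ x. ennreal (C / (r * a)) * ennreal (\<bar>f x\<bar> powr r)
                      + ennreal (C / (s * b)) * ennreal (\<bar>g x\<bar> powr s) \<partial>M)"
      using 3 r s rs Youngs_inequality_scaled[of r s a b]
      by (intro nn_integral_mono)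
        (simp add: C_def ennreal_mult[symmetric] ennreal_plus[symmetric] del: ennreal_plus)
    also have "\<dots> = ennreal (C / (r * a)) * ?A + ennreal (C / (s * b)) * ?B"
      by (simp add: nn_integral_add nn_integral_cmult)
    also have "\<dots> = ennreal (C / r + C / s)"
      using 3 r s C by (simp add: ennreal_mult[symmetric] ennreal_plus[symmetric] del: ennreal_plus)
    also have "C / r + C / s = C"
      using arg_cong[OF rs, of "(*) C"] by (simp add: distrib_left)
    also have "ennreal C = epow ?A (1/r) * epow ?B (1/s)"
      using 3 by (simp add: epow_ennreal C_def ennreal_mult)
    finally show ?thesis .
  qed
qed

lemma Holder_inequality_1_top:
  fixes f g :: "'a \<Rightarrow> real"
  assumes [measurable]: "f \<in> borel_measurable M" "g \<in> borel_measurable M"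
  shows "(\<integral>\<^sup>+ x. ennreal \<bar>f x * g x\<bar> \<partial>M) \<le> lpn M 1 (\<lambda>x. ennreal \<bar>f x\<bar>) * lpn M \<infinity> (\<lambda>x. ennreal \<bar>g x\<bar>)"
proof -
  have "(\<integral>\<^sup>+ x. ennreal \<bar>f x * g x\<bar> \<partial>M) = (\<integral>\<^sup>+ x. ennreal \<bar>f x\<bar> * ennreal \<bar>g x\<bar> \<partial>M)"
    by (simp add: abs_mult ennreal_mult)
  also have "\<dots> \<le> (\<integral>\<^sup>+ x. ennreal \<bar>f x\<bar> * lpn M \<infinity> (\<lambda>x. ennreal \<bar>g x\<bar>) \<partial>M)"
    using lpn_top_AE_le[of "\<lambda>x. ennreal \<bar>g x\<bar>" M]
    by (intro nn_integral_mono_AE) (auto elim!: eventually_mono intro: mult_left_mono)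
  finally show ?thesis by (simp add: lpn_1 nn_integral_multc)
qed

lemma Holder_inequality:
  fixes f g :: "'a \<Rightarrow> real" and p q :: ennreal
  assumes [measurable]: "f \<in> borel_measurable M" "g \<in> borel_measurable M"
    and "1 \<le> p" "1 \<le> q" "inverse p + inverse q = 1"
  shows "(\<integral>\<^sup>+ x. ennreal \<bar>f x * g x\<bar> \<partial>M) \<le> lpn M p (\<lambda>x. ennreal \<bar>f x\<bar>) * lpn M q (\<lambda>x. ennreal \<bar>g x\<bar>)"
  using assms(3-5)
proof (cases rule: conjugate_exponent_cases)
  case 1
  then show ?thesis using Holder_inequality_1_top[of g M f] by (simp add: mult.commute)
next
  case 2
  then show ?thesis using Holder_inequality_1_top[of f M g] by simp
next
  case (3 r s)
  then show ?thesis using Holder_inequality_real_exponents[of f M g r s] by (simp add: lpn_ennreal_abs)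
qed

definition norming_function :: "'a measure \<Rightarrow> ennreal \<Rightarrow> ('a \<Rightarrow> real) \<Rightarrow> ennreal \<Rightarrow> ('a \<Rightarrow> real) \<Rightarrow> bool"
  where "norming_function M p K c g \<longleftrightarrow>
    g \<in> borel_measurable M \<and> lpn M p (\<lambda>y. ennreal \<bar>g y\<bar>) < \<infinity> \<and> integrable M (\<lambda>y. K y * g y) \<and>
    0 < (\<integral>y. K y * g y \<partial>M) \<and> c * lpn M p (\<lambda>y. ennreal \<bar>g y\<bar>) \<le> ennreal (\<integral>y. K y * g y \<partial>M)"

lemma norming_functionI:
  assumes [measurable]: "K \<in> borel_measurable M" "g \<in> borel_measurable M"
    and fin: "lpn M p (\<lambda>y. ennreal \<bar>g y\<bar>) < \<infinity>"
    and nonneg: "\<And>y. 0 \<le> K y * g y"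
    and int_fin: "(\<integral>\<^sup>+ y. ennreal (K y * g y) \<partial>M) < \<infinity>"
    and int_pos: "0 < (\<integral>\<^sup>+ y. ennreal (K y * g y) \<partial>M)"
    and le: "c * lpn M p (\<lambda>y. ennreal \<bar>g y\<bar>) \<le> (\<integral>\<^sup>+ y. ennreal (K y * g y) \<partial>M)"
  shows "norming_function M p K c g"
proof -
  have int: "integrable M (\<lambda>y. K y * g y)"
    using int_fin nonneg by (intro integrableI_bounded) auto
  moreover have "(\<integral>\<^sup>+ y. ennreal (K y * g y) \<partial>M) = ennreal (\<integral>y. K y * g y \<partial>M)"
    using int nonneg by (intro nn_integral_eq_integral) auto
  ultimately show ?thesis
    using fin int_pos le by (auto simp: norming_function_def ennreal_less_zero_iff)
qed

lemma norming_function_sgn: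
  assumes [measurable]: "K \<in> borel_measurable M"
    and fin: "lpn M 1 (\<lambda>y. ennreal \<bar>K y\<bar>) < \<infinity>"
    and c: "0 < c" "c < lpn M 1 (\<lambda>y. ennreal \<bar>K y\<bar>)"
  shows "norming_function M \<infinity> K c (\<lambda>y. sgn (K y))"
proof (rule norming_functionI)
  have sgn_le: "lpn M \<infinity> (\<lambda>y. ennreal \<bar>sgn (K y)\<bar>) \<le> 1"
    by (rule lpn_top_le) auto
  then show "lpn M \<infinity> (\<lambda>y. ennreal \<bar>sgn (K y)\<bar>) < \<infinity>"
    by (simp add: le_less_trans)
  have K_sgn: "K y * sgn (K y) = \<bar>K y\<bar>" for y
    by (simp add: abs_sgn)
  show "(\<integral>\<^sup>+ y. ennreal (K y * sgn (K y)) \<partial>M) < \<infinity>"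
    using fin by (simp add: K_sgn lpn_1)
  show "0 < (\<integral>\<^sup>+ y. ennreal (K y * sgn (K y)) \<partial>M)"
    using c by (simp add: K_sgn lpn_1)
  have "c * lpn M \<infinity> (\<lambda>y. ennreal \<bar>sgn (K y)\<bar>) \<le> c"
    using mult_left_mono[OF sgn_le] by simp
  also have "\<dots> \<le> (\<integral>\<^sup>+ y. ennreal (K y * sgn (K y)) \<partial>M)"
    using c by (simp add: K_sgn lpn_1)
  finally show "c * lpn M \<infinity> (\<lambda>y. ennreal \<bar>sgn (K y)\<bar>) \<le> \<dots>" .
qed (auto simp: sgn_if)

lemma norming_function_powr:
  assumes [measurable]: "K \<in> borel_measurable M"
    and r: "1 < r" and s: "1 < s" and rs: "1/r + 1/s = 1"
    and fin: "lpn M (ennreal s) (\<lambda>y. ennreal \<bar>K y\<bar>) < \<infinity>"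
    and c: "0 < c" "c < lpn M (ennreal s) (\<lambda>y. ennreal \<bar>K y\<bar>)"
  shows "norming_function M (ennreal r) K c (\<lambda>y. sgn (K y) * \<bar>K y\<bar> powr (s - 1))"
    (is "norming_function _ _ _ _ ?g")
proof -
  define I where "I = (\<integral>\<^sup>+ y. ennreal (\<bar>K y\<bar> powr s) \<partial>M)"
  have K_norm: "lpn M (ennreal s) (\<lambda>y. ennreal \<bar>K y\<bar>) = epow I (1/s)"
    using s by (simp add: I_def lpn_ennreal_abs)
  have "I < \<infinity>" "I \<noteq> 0"
    using fin c K_norm s epow_eq_0_iff[of "1/s" I] by (auto simp: epow_def less_top split: if_splits)
  then obtain i where i: "I = ennreal i" "0 < i"
    by (cases I rule: ennreal_cases) (auto simp: less_le)
  have sr: "(s - 1) * r = s"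
    using rs r s by (simp add: field_simps)
  have Kg: "K y * ?g y = \<bar>K y\<bar> powr s" for y
  proof -
    have "K y * ?g y = \<bar>K y\<bar> * \<bar>K y\<bar> powr (s - 1)"
      by (simp add: mult.assoc[symmetric] abs_sgn)
    also have "\<dots> = \<bar>K y\<bar> powr s"
      by (subst powr_mult_base) auto
    finally show ?thesis .
  qed
  have "\<bar>?g y\<bar> powr r = \<bar>K y\<bar> powr s" for y
    using r s by (cases "K y = 0") (simp_all add: abs_mult powr_powr sr)
  then have g_norm: "lpn M (ennreal r) (\<lambda>y. ennreal \<bar>?g y\<bar>) = epow I (1/r)"
    using r by (simp add: lpn_ennreal_abs I_def)
  show ?thesis
  proof (rule norming_functionI)
    show "lpn M (ennreal r) (\<lambda>y. ennreal \<bar>?g y\<bar>) < \<infinity>"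
      using i by (simp add: g_norm epow_ennreal)
    show "(\<integral>\<^sup>+ y. ennreal (K y * ?g y) \<partial>M) < \<infinity>" "0 < (\<integral>\<^sup>+ y. ennreal (K y * ?g y) \<partial>M)"
      using i by (simp_all add: Kg I_def[symmetric])
    have "c * lpn M (ennreal r) (\<lambda>y. ennreal \<bar>?g y\<bar>) \<le> epow I (1/s) * epow I (1/r)"
      unfolding g_norm using c K_norm by (intro mult_right_mono) auto
    also have "\<dots> = I"
      using i rs by (simp add: epow_ennreal ennreal_mult[symmetric] powr_add[symmetric] add.commute)
    finally show "c * lpn M (ennreal r) (\<lambda>y. ennreal \<bar>?g y\<bar>) \<le> (\<integral>\<^sup>+ y. ennreal (K y * ?g y) \<partial>M)"
      by (simp add: Kg I_def)
  qed (auto simp: Kg)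
qed

lemma emeasure_gt_pos_of_less_lpn_top:
  assumes "h \<in> borel_measurable M" "c < lpn M \<infinity> h"
  shows "0 < emeasure M {x \<in> space M. c < h x}"
proof -
  have "enn2ereal c < esssup M (\<lambda>x. enn2ereal (h x))"
    using assms(2) lpn_top_le[of "\<lambda>x. h x" M]
    unfolding lpn_def by (metis e2ennreal_enn2ereal e2ennreal_mono not_le)
  then have "0 < emeasure M {x \<in> space M. enn2ereal c < enn2ereal (h x)}"
    using assms(1) by (intro esssup_pos_measure) measurable
  then show ?thesis by (simp add: less_ennreal.rep_eq)
qed

lemma norming_function_indicator:
  assumes "finite_measure M" and [measurable]: "K \<in> borel_measurable M"
    and fin: "lpn M \<infinity> (\<lambda>y. ennreal \<bar>K y\<bar>) < \<infinity>"
    and c: "0 < c" "c < lpn M \<infinity> (\<lambda>y. ennreal \<bar>K y\<bar>)"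
  defines "A \<equiv> {y \<in> space M. c < ennreal \<bar>K y\<bar>}"
  shows "norming_function M 1 K c (\<lambda>y. sgn (K y) * indicator A y)"
    (is "norming_function _ _ _ _ ?g")
proof -
  interpret finite_measure M by fact
  have A[measurable]: "A \<in> sets M" unfolding A_def by measurable
  have A_pos: "0 < emeasure M A"
    unfolding A_def using c by (intro emeasure_gt_pos_of_less_lpn_top) auto
  have A_fin: "emeasure M A < \<infinity>"
    by (simp add: less_top[symmetric])
  have Kg: "K y * ?g y = \<bar>K y\<bar> * indicator A y" for y
    by (simp add: abs_sgn mult.assoc[symmetric])
  have g_norm: "lpn M 1 (\<lambda>y. ennreal \<bar>?g y\<bar>) \<le> emeasure M A"
    unfolding lpn_1
    by (subst nn_integral_indicator[OF A, symmetric])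
      (intro nn_integral_mono, auto simp: indicator_def abs_mult)
  have lower: "c * indicator A y \<le> ennreal (K y * ?g y)" for y
    unfolding Kg by (auto simp: A_def indicator_def less_imp_le)
  show ?thesis
  proof (rule norming_functionI)
    show "lpn M 1 (\<lambda>y. ennreal \<bar>?g y\<bar>) < \<infinity>"
      using g_norm A_fin by (rule le_less_trans)
    let ?L = "lpn M \<infinity> (\<lambda>y. ennreal \<bar>K y\<bar>)"
    have "(\<integral>\<^sup>+ y. ennreal (K y * ?g y) \<partial>M) \<le> (\<integral>\<^sup>+ y. ?L * indicator A y \<partial>M)"
      unfolding Kg using lpn_top_AE_le[of "\<lambda>y. ennreal \<bar>K y\<bar>" M]
      by (intro nn_integral_mono_AE) (auto elim!: eventually_mono simp: indicator_def)
    also have "\<dots> < \<infinity>"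
      using fin A_fin by (simp only: nn_integral_cmult_indicator[OF A]) (simp add: ennreal_mult_less_top)
    finally show "(\<integral>\<^sup>+ y. ennreal (K y * ?g y) \<partial>M) < \<infinity>" .
    have "c * emeasure M A \<le> (\<integral>\<^sup>+ y. ennreal (K y * ?g y) \<partial>M)"
      using lower by (subst nn_integral_cmult_indicator[OF A, symmetric]) (rule nn_integral_mono)
    moreover have "0 < c * emeasure M A"
      using c A_pos by (simp add: ennreal_zero_less_mult_iff)
    moreover have "c * lpn M 1 (\<lambda>y. ennreal \<bar>?g y\<bar>) \<le> c * emeasure M A"
      using g_norm by (rule mult_left_mono) simp
    ultimately show "0 < (\<integral>\<^sup>+ y. ennreal (K y * ?g y) \<partial>M)"
      and "c * lpn M 1 (\<lambda>y. ennreal \<bar>?g y\<bar>) \<le> (\<integral>\<^sup>+ y. ennreal (K y * ?g y) \<partial>M)"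
      by (auto intro: less_le_trans order_trans)
  qed (auto simp: Kg)
qed

lemma ex_norming_function:
  fixes K :: "'a \<Rightarrow> real" and p q :: ennreal
  assumes "finite_measure M" and [measurable]: "K \<in> borel_measurable M"
    and "1 \<le> p" "1 \<le> q" "inverse p + inverse q = 1"
    and fin: "lpn M q (\<lambda>y. ennreal \<bar>K y\<bar>) < \<infinity>"
    and c: "0 < c" "c < lpn M q (\<lambda>y. ennreal \<bar>K y\<bar>)"
  shows "\<exists>g. norming_function M p K c g"
  using assms(3-5)
proof (cases rule: conjugate_exponent_cases)
  case 1
  then show ?thesis using norming_function_sgn[of K M c] fin c by auto
next
  case 2
  then show ?thesis using norming_function_indicator[OF assms(1-2), of c] fin c by auto
next
  case (3 r s)
  then show ?thesis using norming_function_powr[of K M r s c] fin c by auto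
qed

locale partition_quadrature =
  fixes M :: "'a measure" and N :: nat and X :: "nat \<Rightarrow> 'a set" and \<omega> :: "nat \<Rightarrow> real"
    and xs :: "nat \<Rightarrow> 'a" and p q :: ennreal and \<Phi> :: "'a \<Rightarrow> 'a \<Rightarrow> real"
  assumes sets: "\<And>j. j < N \<Longrightarrow> X j \<in> sets M"
    and disj: "disjoint_family_on X {..<N}"
    and union: "(\<Union>j<N. X j) = space M"
    and meas: "\<And>j. j < N \<Longrightarrow> emeasure M (X j) = ennreal (\<omega> j)"
    and wpos: "\<And>j. j < N \<Longrightarrow> \<omega> j > 0"
    and nodes: "\<And>j. j < N \<Longrightarrow> xs j \<in> X j"
    and p1: "1 \<le> p" and q1: "1 \<le> q" and conj: "inverse p + inverse q = 1"
    and \<Phi>_meas: "(\<lambda>(x, y). \<Phi> x y) \<in> borel_measurable (M \<Otimes>\<^sub>M M)"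
    and \<Phi>_row: "\<forall>x\<in>space M. lpn M q (\<lambda>y. ennreal \<bar>\<Phi> x y\<bar>) < \<infinity>"
    and \<Phi>_col: "lpn M q (\<lambda>y. \<integral>\<^sup>+ x. ennreal \<bar>\<Phi> x y\<bar> \<partial>M) < \<infinity>"
begin

sublocale finite_measure M
proof (rule finite_measureI)
  have "emeasure M (space M) \<le> (\<Sum>j<N. emeasure M (X j))"
    unfolding union[symmetric] using sets by (intro emeasure_subadditive_finite) auto
  also have "\<dots> < \<infinity>"
    using meas by (simp add: less_top[symmetric])
  finally show "emeasure M (space M) \<noteq> \<infinity>" by simp
qed

sublocale P: pair_sigma_finite M M by intro_locales

lemma Holder_q_p:
  assumes "f \<in> borel_measurable M" "g \<in> borel_measurable M"
  shows "(\<integral>\<^sup>+ y. ennreal \<bar>f y * g y\<bar> \<partial>M) \<le> lpn M q (\<lambda>y. ennreal \<bar>f y\<bar>) * lpn M p (\<lambda>y. ennreal \<bar>g y\<bar>)"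
  using conj by (intro Holder_inequality assms q1 p1) (simp add: add.commute)

lemma node_in_space: "j < N \<Longrightarrow> xs j \<in> space M"
  using nodes union by blast

lemma measurable_\<Phi> [measurable]: "(\<lambda>z. \<Phi> (fst z) (snd z)) \<in> borel_measurable (M \<Otimes>\<^sub>M M)"
  using \<Phi>_meas by (simp add: case_prod_beta')

lemma measurable_\<Phi>_swap [measurable]: "(\<lambda>z. \<Phi> (snd z) (fst z)) \<in> borel_measurable (M \<Otimes>\<^sub>M M)"
proof -
  have "(\<lambda>z. (snd z, fst z)) \<in> M \<Otimes>\<^sub>M M \<rightarrow>\<^sub>M M \<Otimes>\<^sub>M M" by measurable
  from measurable_compose[OF this measurable_\<Phi>] show ?thesis by simp
qed

lemma measurable_\<Phi>_row [measurable]: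
  assumes "x \<in> space M" shows "\<Phi> x \<in> borel_measurable M"
proof -
  have "(\<lambda>y. (x, y)) \<in> M \<rightarrow>\<^sub>M M \<Otimes>\<^sub>M M" using assms by measurable
  from measurable_compose[OF this measurable_\<Phi>] show ?thesis by simp
qed

lemma measurable_\<Phi>_col:
  assumes "y \<in> space M" shows "(\<lambda>x. \<Phi> x y) \<in> borel_measurable M"
proof -
  have "(\<lambda>x. (x, y)) \<in> M \<rightarrow>\<^sub>M M \<Otimes>\<^sub>M M" using assms by measurable
  from measurable_compose[OF this measurable_\<Phi>] show ?thesis by simp
qed

definition col_L1 :: "'a \<Rightarrow> ennreal"
  where "col_L1 y = (\<integral>\<^sup>+ x. ennreal \<bar>\<Phi> x y\<bar> \<partial>M)"

lemma measurable_col_L1 [measurable]: "col_L1 \<in> borel_measurable M"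
  unfolding col_L1_def by measurable

lemma AE_col_L1_less_top: "AE y in M. col_L1 y < \<infinity>"
  using \<Phi>_col by (intro AE_less_top_of_lpn_less_top[OF q1]) (auto simp: col_L1_def[abs_def])

lemma AE_integrable_col: "AE y in M. integrable M (\<lambda>x. \<Phi> x y)"
  using AE_col_L1_less_top AE_space
proof eventually_elim
  case (elim y)
  then show ?case using measurable_\<Phi>_col[OF elim(2)]
    by (intro integrableI_bounded) (auto simp: col_L1_def)
qed

definition err_kernel :: "'a \<Rightarrow> real"
  where "err_kernel y = (\<Sum>j<N. (LINT x:X j|M. (\<Phi> (xs j) y - \<Phi> x y)))"

abbreviation err_kernel_norm :: ennreal
  where "err_kernel_norm \<equiv> lpn M q (\<lambda>y. ennreal \<bar>err_kernel y\<bar>)"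

lemma measurable_err_kernel [measurable]: "err_kernel \<in> borel_measurable M"
proof -
  have "(\<lambda>y. LINT x:X j|M. (\<Phi> (xs j) y - \<Phi> x y)) \<in> borel_measurable M" if j: "j < N" for j
  proof -
    have [measurable]: "\<Phi> (xs j) \<in> borel_measurable M" "X j \<in> sets M"
      using node_in_space[OF j] sets[OF j] by simp_all
    show ?thesis unfolding set_lebesgue_integral_def by measurable
  qed
  then show ?thesis unfolding err_kernel_def by (intro borel_measurable_sum) auto
qed

lemma abs_cell_integral_le:
  assumes j: "j < N" and y: "y \<in> space M"
  shows "ennreal \<bar>LINT x:X j|M. (\<Phi> (xs j) y - \<Phi> x y)\<bar> \<le> ennreal (\<omega> j) * ennreal \<bar>\<Phi> (xs j) y\<bar> + col_L1 y"
proof -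
  have [measurable]: "X j \<in> sets M" "(\<lambda>x. \<Phi> x y) \<in> borel_measurable M"
    using sets[OF j] measurable_\<Phi>_col[OF y] by simp_all
  define F where "F x = indicator (X j) x * (\<Phi> (xs j) y - \<Phi> x y)" for x
  have "ennreal \<bar>\<integral>x. F x \<partial>M\<bar> \<le> (\<integral>\<^sup>+ x. ennreal \<bar>F x\<bar> \<partial>M)"
    using integral_norm_bound_ennreal[of M F] by (cases "integrable M F") (simp_all add: not_integrable_integral_eq)
  also have "\<dots> \<le> (\<integral>\<^sup>+ x. indicator (X j) x * ennreal \<bar>\<Phi> (xs j) y\<bar> + ennreal \<bar>\<Phi> x y\<bar> \<partial>M)"
    by (intro nn_integral_mono)
      (auto simp: F_def indicator_def ennreal_plus[symmetric] abs_triangle_ineq4 simp del: ennreal_plus)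
  also have "\<dots> = ennreal (\<omega> j) * ennreal \<bar>\<Phi> (xs j) y\<bar> + col_L1 y"
    using meas[OF j] by (simp add: nn_integral_add nn_integral_multc col_L1_def)
  finally show ?thesis by (simp add: set_lebesgue_integral_def F_def)
qed

lemma err_kernel_norm_less_top: "err_kernel_norm < \<infinity>"
proof (rule lpn_less_top_mono[OF q1])
  show "AE y in M. ennreal \<bar>err_kernel y\<bar> \<le> (\<Sum>j<N. ennreal (\<omega> j) * ennreal \<bar>\<Phi> (xs j) y\<bar> + col_L1 y)"
  proof (rule AE_I2)
    fix y assume y: "y \<in> space M"
    have "ennreal \<bar>err_kernel y\<bar> \<le> (\<Sum>j<N. ennreal \<bar>LINT x:X j|M. (\<Phi> (xs j) y - \<Phi> x y)\<bar>)"
      unfolding err_kernel_def by (simp add: sum_ennreal ennreal_leI sum_abs)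
    also have "\<dots> \<le> (\<Sum>j<N. ennreal (\<omega> j) * ennreal \<bar>\<Phi> (xs j) y\<bar> + col_L1 y)"
      using abs_cell_integral_le y by (intro sum_mono) auto
    finally show "ennreal \<bar>err_kernel y\<bar> \<le> \<dots>" .
  qed
  show "lpn M q (\<lambda>y. \<Sum>j<N. ennreal (\<omega> j) * ennreal \<bar>\<Phi> (xs j) y\<bar> + col_L1 y) < \<infinity>"
  proof (rule lpn_less_top_sum[OF q1])
    fix j assume "j \<in> {..<N}"
    then have j: "j < N" by simp
    have [measurable]: "\<Phi> (xs j) \<in> borel_measurable M" using node_in_space[OF j] by simp
    show "(\<lambda>y. ennreal (\<omega> j) * ennreal \<bar>\<Phi> (xs j) y\<bar> + col_L1 y) \<in> borel_measurable M"
      by measurable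
    have "lpn M q (\<lambda>y. ennreal (\<omega> j) * ennreal \<bar>\<Phi> (xs j) y\<bar>) < \<infinity>"
      using \<Phi>_row node_in_space[OF j] wpos[OF j] by (intro lpn_less_top_cmult[OF q1]) auto
    moreover have "lpn M q col_L1 < \<infinity>"
      using \<Phi>_col by (simp add: col_L1_def[abs_def])
    ultimately show "lpn M q (\<lambda>y. ennreal (\<omega> j) * ennreal \<bar>\<Phi> (xs j) y\<bar> + col_L1 y) < \<infinity>"
      by (intro lpn_less_top_add[OF q1]) auto
  qed auto
qed measurable

lemma integrable_row_mult:
  assumes [measurable]: "g \<in> borel_measurable M" and g: "lpn M p (\<lambda>y. ennreal \<bar>g y\<bar>) < \<infinity>"
    and x: "x \<in> space M"
  shows "integrable M (\<lambda>y. \<Phi> x y * g y)"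
proof (rule integrableI_bounded)
  show "(\<lambda>y. \<Phi> x y * g y) \<in> borel_measurable M"
    using x by measurable
  have "(\<integral>\<^sup>+ y. ennreal \<bar>\<Phi> x y * g y\<bar> \<partial>M) \<le> lpn M q (\<lambda>y. ennreal \<bar>\<Phi> x y\<bar>) * lpn M p (\<lambda>y. ennreal \<bar>g y\<bar>)"
    using x by (intro Holder_q_p) auto
  also have "\<dots> < \<infinity>"
    using \<Phi>_row x g by (simp add: ennreal_mult_less_top)
  finally show "(\<integral>\<^sup>+ y. ennreal (norm (\<Phi> x y * g y)) \<partial>M) < \<infinity>" by simp
qed

lemma integrable_pair_mult:
  assumes [measurable]: "g \<in> borel_measurable M" and g: "lpn M p (\<lambda>y. ennreal \<bar>g y\<bar>) < \<infinity>"
  shows "integrable (M \<Otimes>\<^sub>M M) (\<lambda>(x, y). \<Phi> x y * g y)"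
proof (rule integrableI_bounded)
  show m: "(\<lambda>(x, y). \<Phi> x y * g y) \<in> borel_measurable (M \<Otimes>\<^sub>M M)"
    unfolding case_prod_beta' by measurable
  define c where "c y = enn2real (col_L1 y)" for y
  have "(\<integral>\<^sup>+ z. ennreal (norm ((\<lambda>(x, y). \<Phi> x y * g y) z)) \<partial>(M \<Otimes>\<^sub>M M))
      = (\<integral>\<^sup>+ y. (\<integral>\<^sup>+ x. ennreal \<bar>\<Phi> x y * g y\<bar> \<partial>M) \<partial>M)"
    by (subst P.nn_integral_snd[symmetric]) (use m in \<open>auto simp: case_prod_beta'\<close>)
  also have "\<dots> = (\<integral>\<^sup>+ y. col_L1 y * ennreal \<bar>g y\<bar> \<partial>M)"
    using measurable_\<Phi>_col
    by (intro nn_integral_cong) (simp add: col_L1_def abs_mult ennreal_mult nn_integral_multc)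
  also have "\<dots> = (\<integral>\<^sup>+ y. ennreal \<bar>c y * g y\<bar> \<partial>M)"
    using AE_col_L1_less_top
    by (intro nn_integral_cong_AE, eventually_elim) (auto simp: c_def abs_mult ennreal_mult)
  also have "\<dots> \<le> lpn M q (\<lambda>y. ennreal \<bar>c y\<bar>) * lpn M p (\<lambda>y. ennreal \<bar>g y\<bar>)"
    by (intro Holder_q_p) (auto simp: c_def)
  also have "\<dots> < \<infinity>"
  proof -
    have "lpn M q (\<lambda>y. ennreal \<bar>c y\<bar>) < \<infinity>"
    proof (rule lpn_less_top_mono[OF q1])
      show "AE y in M. ennreal \<bar>c y\<bar> \<le> col_L1 y"
        by (simp add: c_def ennreal_enn2real_if)
      show "lpn M q col_L1 < \<infinity>"
        using \<Phi>_col by (simp add: col_L1_def[abs_def])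
    qed (simp add: c_def)
    then show ?thesis using g by (simp add: ennreal_mult_less_top)
  qed
  finally show "(\<integral>\<^sup>+ z. ennreal (norm ((\<lambda>(x, y). \<Phi> x y * g y) z)) \<partial>(M \<Otimes>\<^sub>M M)) < \<infinity>" .
qed

lemma sum_indicator_cells:
  assumes "x \<in> space M"
  shows "(\<Sum>j<N. indicator (X j) x) = (1::real)"
proof -
  obtain i where i: "i < N" "x \<in> X i"
    using assms union by blast
  then have "x \<notin> X j" if "j < N" "j \<noteq> i" for j
    using disj that unfolding disjoint_family_on_def by blast
  then have "(\<Sum>j<N. indicator (X j) x) = (\<Sum>j<N. if j = i then 1 else (0::real))"
    using i by (intro sum.cong) (auto simp: indicator_def)
  also have "\<dots> = 1"
    using i by simp
  finally show ?thesis .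
qed

lemma err_kernel_eq:
  assumes y: "y \<in> space M" and int: "integrable M (\<lambda>x. \<Phi> x y)"
  shows "err_kernel y = (\<Sum>j<N. \<omega> j * \<Phi> (xs j) y) - (\<integral>x. \<Phi> x y \<partial>M)"
proof -
  have int_cell: "integrable M (\<lambda>x. indicator (X j) x * \<Phi> x y)" if "j < N" for j
    using integrable_mult_indicator[OF sets[OF that] int] by simp
  have "(LINT x:X j|M. (\<Phi> (xs j) y - \<Phi> x y)) = \<omega> j * \<Phi> (xs j) y - (LINT x:X j|M. \<Phi> x y)"
    if j: "j < N" for j
  proof -
    have "measure M (X j) = \<omega> j"
      using meas[OF j] wpos[OF j] by (intro measure_eq_emeasure_eq_ennreal) auto
    moreover have "integrable M (\<lambda>x. indicator (X j) x * \<Phi> (xs j) y)"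
      using integrable_mult_indicator[OF sets[OF j] integrable_const[of "\<Phi> (xs j) y"]] by simp
    ultimately show ?thesis
      using sets[OF j] unfolding set_lebesgue_integral_def
      by (simp add: right_diff_distrib Bochner_Integration.integral_diff[OF _ int_cell[OF j]])
  qed
  then have "err_kernel y = (\<Sum>j<N. \<omega> j * \<Phi> (xs j) y) - (\<Sum>j<N. LINT x:X j|M. \<Phi> x y)"
    by (simp add: err_kernel_def sum_subtractf)
  also have "(\<Sum>j<N. LINT x:X j|M. \<Phi> x y) = (\<integral>x. (\<Sum>j<N. indicator (X j) x * \<Phi> x y) \<partial>M)"
    unfolding set_lebesgue_integral_def using int_cell
    by (subst Bochner_Integration.integral_sum) auto
  also have "\<dots> = (\<integral>x. \<Phi> x y \<partial>M)"
    by (intro Bochner_Integration.integral_cong)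
      (simp_all add: sum_distrib_right[symmetric] sum_indicator_cells)
  finally show ?thesis .
qed

lemma quad_err_potential:
  assumes [measurable]: "g \<in> borel_measurable M" and g: "lpn M p (\<lambda>y. ennreal \<bar>g y\<bar>) < \<infinity>"
  shows "integrable M (\<lambda>y. err_kernel y * g y)"
    and "quad_err M N xs \<omega> (\<lambda>x. \<integral>y. \<Phi> x y * g y \<partial>M) = (\<integral>y. err_kernel y * g y \<partial>M)"
proof -
  have int_pair: "integrable (M \<Otimes>\<^sub>M M) (\<lambda>(x, y). \<Phi> x y * g y)"
    using integrable_pair_mult[OF _ g] by simp
  define S where "S y = (\<Sum>j<N. \<omega> j * \<Phi> (xs j) y)" for y
  define C where "C y = (\<integral>x. \<Phi> x y \<partial>M)" for y
  have [measurable]: "\<Phi> (xs j) \<in> borel_measurable M" if "j < N" for j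
    using node_in_space[OF that] by simp
  have [measurable]: "S \<in> borel_measurable M" "C \<in> borel_measurable M"
    unfolding S_def C_def by measurable
  have int_row: "integrable M (\<lambda>y. \<Phi> (xs j) y * g y)" if "j < N" for j
    using integrable_row_mult[OF _ g node_in_space[OF that]] by simp
  have int_S: "integrable M (\<lambda>y. S y * g y)"
    using int_row unfolding S_def sum_distrib_right mult.assoc by auto
  have int_C: "integrable M (\<lambda>y. C y * g y)"
    using P.integrable_snd[OF int_pair] by (simp add: C_def)
  have nodes_eq: "(\<Sum>j<N. \<omega> j * (\<integral>y. \<Phi> (xs j) y * g y \<partial>M)) = (\<integral>y. S y * g y \<partial>M)"
    using int_row unfolding S_def sum_distrib_right mult.assoc
    by (simp add: Bochner_Integration.integral_sum)
  have integral_eq: "(\<integral>x. (\<integral>y. \<Phi> x y * g y \<partial>M) \<partial>M) = (\<integral>y. C y * g y \<partial>M)"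
    using P.Fubini_integral[OF int_pair] by (simp add: C_def)
  have AE_eq: "AE y in M. (S y - C y) * g y = err_kernel y * g y"
    using AE_integrable_col AE_space
    by eventually_elim (simp add: err_kernel_eq S_def C_def)
  have int_SC: "integrable M (\<lambda>y. (S y - C y) * g y)"
    using int_S int_C by (simp add: left_diff_distrib)
  show "integrable M (\<lambda>y. err_kernel y * g y)"
    by (rule integrable_cong_AE_imp[OF int_SC _ AE_eq]) simp
  have "quad_err M N xs \<omega> (\<lambda>x. \<integral>y. \<Phi> x y * g y \<partial>M) = (\<integral>y. (S y - C y) * g y \<partial>M)"
    using int_S int_C
    by (simp add: quad_err_def nodes_eq integral_eq left_diff_distrib Bochner_Integration.integral_diff)
  also have "\<dots> = (\<integral>y. err_kernel y * g y \<partial>M)"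
    using AE_eq by (intro integral_cong_AE) auto
  finally show "quad_err M N xs \<omega> (\<lambda>x. \<integral>y. \<Phi> x y * g y \<partial>M) = (\<integral>y. err_kernel y * g y \<partial>M)" .
qed

lemma is_potential_quad_err:
  assumes "is_potential M p \<Phi> g f"
  shows "integrable M f" and "quad_err M N xs \<omega> f = (\<integral>y. err_kernel y * g y \<partial>M)"
proof -
  have [measurable]: "g \<in> borel_measurable M" and g: "lpn M p (\<lambda>y. ennreal \<bar>g y\<bar>) < \<infinity>"
    and f: "\<And>x. x \<in> space M \<Longrightarrow> f x = (\<integral>y. \<Phi> x y * g y \<partial>M)"
    using assms unfolding is_potential_def by auto
  have "integrable M (\<lambda>x. \<integral>y. \<Phi> x y * g y \<partial>M)"
    using P.integrable_fst[OF integrable_pair_mult[OF _ g]] by simp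
  then show "integrable M f"
    using f by (subst Bochner_Integration.integrable_cong) auto
  have "quad_err M N xs \<omega> f = quad_err M N xs \<omega> (\<lambda>x. \<integral>y. \<Phi> x y * g y \<partial>M)"
    using f node_in_space unfolding quad_err_def
    by (simp cong: Bochner_Integration.integral_cong)
  also have "\<dots> = (\<integral>y. err_kernel y * g y \<partial>M)"
    using quad_err_potential(2)[OF _ g] by simp
  finally show "quad_err M N xs \<omega> f = (\<integral>y. err_kernel y * g y \<partial>M)" .
qed

lemma abs_quad_err_le_potential:
  assumes "is_potential M p \<Phi> g f"
  shows "ennreal \<bar>quad_err M N xs \<omega> f\<bar> \<le> err_kernel_norm * lpn M p (\<lambda>y. ennreal \<bar>g y\<bar>)"
proof -
  have [measurable]: "g \<in> borel_measurable M" and g: "lpn M p (\<lambda>y. ennreal \<bar>g y\<bar>) < \<infinity>"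
    using assms unfolding is_potential_def by auto
  have "ennreal \<bar>quad_err M N xs \<omega> f\<bar> \<le> (\<integral>\<^sup>+ y. ennreal (norm (err_kernel y * g y)) \<partial>M)"
    using integral_norm_bound_ennreal[OF quad_err_potential(1)[OF _ g]]
    by (simp add: is_potential_quad_err(2)[OF assms])
  also have "\<dots> \<le> err_kernel_norm * lpn M p (\<lambda>y. ennreal \<bar>g y\<bar>)"
    using Holder_q_p[of err_kernel g] by simp
  finally show ?thesis .
qed

lemma abs_quad_err_le:
  assumes "in_H M p \<Phi> f"
  shows "ennreal \<bar>quad_err M N xs \<omega> f\<bar> \<le> err_kernel_norm * H_norm M p \<Phi> f"
proof (cases "err_kernel_norm = 0")
  case True
  with assms show ?thesis
    using abs_quad_err_le_potential unfolding in_H_def by fastforce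
next
  case False
  let ?E = "ennreal \<bar>quad_err M N xs \<omega> f\<bar>"
  have "?E / err_kernel_norm \<le> H_norm M p \<Phi> f"
    unfolding H_norm_def
  proof (rule INF_greatest)
    fix g assume "g \<in> {g. is_potential M p \<Phi> g f}"
    then show "?E / err_kernel_norm \<le> lpn M p (\<lambda>y. ennreal \<bar>g y\<bar>)"
      using False abs_quad_err_le_potential
      by (intro divide_le_posI_ennreal) (auto simp: zero_less_iff_neq_zero)
  qed
  then have "?E / err_kernel_norm * err_kernel_norm \<le> H_norm M p \<Phi> f * err_kernel_norm"
    by (rule mult_right_mono) simp
  moreover have "?E / err_kernel_norm * err_kernel_norm = ?E"
    using False err_kernel_norm_less_top by (simp add: ennreal_divide_times)
  ultimately show ?thesis by (simp add: mult.commute)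
qed

lemma err_norm_le: "err_norm M p \<Phi> N xs \<omega> \<le> err_kernel_norm"
  unfolding err_norm_def
proof (rule SUP_least)
  fix f assume "f \<in> {f. in_H M p \<Phi> f \<and> H_norm M p \<Phi> f \<noteq> 0}"
  then show "ennreal \<bar>quad_err M N xs \<omega> f\<bar> / H_norm M p \<Phi> f \<le> err_kernel_norm"
    using abs_quad_err_le
    by (intro divide_le_posI_ennreal) (auto simp: zero_less_iff_neq_zero mult.commute)
qed

lemma err_norm_ge: "err_kernel_norm \<le> err_norm M p \<Phi> N xs \<omega>"
proof (rule dense_le)
  fix c assume c: "c < err_kernel_norm"
  show "c \<le> err_norm M p \<Phi> N xs \<omega>"
  proof (cases "c = 0")
    case False
    then obtain g where "norming_function M p err_kernel c g"
      using ex_norming_function[OF finite_measure_axioms measurable_err_kernel p1 q1 conj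
          err_kernel_norm_less_top _ c]
      by (auto simp: zero_less_iff_neq_zero)
    then have [measurable]: "g \<in> borel_measurable M" and g: "lpn M p (\<lambda>y. ennreal \<bar>g y\<bar>) < \<infinity>"
      and pos: "0 < (\<integral>y. err_kernel y * g y \<partial>M)"
      and norming: "c * lpn M p (\<lambda>y. ennreal \<bar>g y\<bar>) \<le> ennreal (\<integral>y. err_kernel y * g y \<partial>M)"
      by (auto simp: norming_function_def)
    define f where "f x = (\<integral>y. \<Phi> x y * g y \<partial>M)" for x
    have pot: "is_potential M p \<Phi> g f"
      unfolding is_potential_def f_def using g integrable_row_mult[OF _ g] by auto
    then have f: "in_H M p \<Phi> f"
      unfolding in_H_def by blast
    have E: "quad_err M N xs \<omega> f = (\<integral>y. err_kernel y * g y \<partial>M)"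
      by (rule is_potential_quad_err(2)[OF pot])
    let ?H = "H_norm M p \<Phi> f"
    have H_le: "?H \<le> lpn M p (\<lambda>y. ennreal \<bar>g y\<bar>)"
      unfolding H_norm_def using pot by (intro INF_lower) simp
    have "?H \<noteq> 0"
      using abs_quad_err_le[OF f] pos E by (auto simp: not_le[symmetric])
    moreover have "?H \<noteq> \<infinity>"
      using H_le g by (auto simp: top_unique)
    moreover have "c * ?H \<le> ennreal \<bar>quad_err M N xs \<omega> f\<bar>"
      using mult_left_mono[OF H_le, of c] norming pos E by simp
    ultimately have "c \<le> ennreal \<bar>quad_err M N xs \<omega> f\<bar> / ?H"
      using divide_right_mono_ennreal[of "c * ?H" _ ?H] by (simp add: mult_divide_eq_ennreal)
    also have "\<dots> \<le> err_norm M p \<Phi> N xs \<omega>"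
      unfolding err_norm_def using f \<open>?H \<noteq> 0\<close> by (intro SUP_upper) auto
    finally show ?thesis .
  qed simp
qed

end

theorem lemma2:
  fixes M :: "'a measure" and N :: nat and X :: "nat \<Rightarrow> 'a set" and \<omega> :: "nat \<Rightarrow> real"
    and xs :: "nat \<Rightarrow> 'a" and p q :: ennreal and \<Phi> :: "'a \<Rightarrow> 'a \<Rightarrow> real"
  assumes sets: "\<And>j. j < N \<Longrightarrow> X j \<in> sets M"
    and disj: "disjoint_family_on X {..<N}"
    and union: "(\<Union>j<N. X j) = space M"
    and meas: "\<And>j. j < N \<Longrightarrow> emeasure M (X j) = ennreal (\<omega> j)"
    and wpos: "\<And>j. j < N \<Longrightarrow> \<omega> j > 0"
    and nodes: "\<And>j. j < N \<Longrightarrow> xs j \<in> X j"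
    and p1: "1 \<le> p" and q1: "1 \<le> q" and conj: "inverse p + inverse q = 1"
    and \<Phi>_meas: "(\<lambda>(x, y). \<Phi> x y) \<in> borel_measurable (M \<Otimes>\<^sub>M M)"
    and \<Phi>_row: "\<forall>x\<in>space M. lpn M q (\<lambda>y. ennreal \<bar>\<Phi> x y\<bar>) < \<infinity>"
    and \<Phi>_col: "lpn M q (\<lambda>y. \<integral>\<^sup>+ x. ennreal \<bar>\<Phi> x y\<bar> \<partial>M) < \<infinity>"
  shows "(\<forall>f. in_H M p \<Phi> f \<longrightarrow> integrable M f)
    \<and> (\<forall>f. in_H M p \<Phi> f \<longrightarrow>
          ennreal \<bar>quad_err M N xs \<omega> f\<bar> \<le> err_norm M p \<Phi> N xs \<omega> * H_norm M p \<Phi> f)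
    \<and> err_norm M p \<Phi> N xs \<omega> < \<infinity>
    \<and> err_norm M p \<Phi> N xs \<omega> =
        lpn M q (\<lambda>y. ennreal \<bar>\<Sum>j<N. (LINT x:X j|M. (\<Phi> (xs j) y - \<Phi> x y))\<bar>)"
proof -
  interpret partition_quadrature M N X \<omega> xs p q \<Phi>
    by unfold_locales (fact assms)+
  have norm_eq: "err_norm M p \<Phi> N xs \<omega> = err_kernel_norm"
    using err_norm_le err_norm_ge by (rule antisym)
  show ?thesis
    unfolding norm_eq
    using is_potential_quad_err(1) abs_quad_err_le err_kernel_norm_less_top
    by (auto simp: in_H_def err_kernel_def)
qed

end
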